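(* Let $n\ge1$, $X=\{1,\dots,n\}$, $\mathcal{A}$ the algebra of all functions $X\to\mathbb{R}$ with pointwise operations, $\sigma:X\to X$ a bijection and $\tilde{\sigma}(f)=f\circ\sigma^{-1}$. In the skew polynomial ring $\mathcal{A}[x,\tilde{\sigma},0]$, the centralizer of $\mathcal{A}$ is $$C(\mathcal{A})=\Big\{\sum_{k=0}^m f_kx^k : m\ge0,\ f_k\in\mathcal{A},\ f_k=0 \text{ on } Sep^k(X) \text{ for all } k\Big\}.$$
   Context: For a ring $R$ with endomorphism $\sigma$ and $\sigma$-derivation $\Delta$ (additive map with $\Delta(ab)=\sigma(a)\Delta(b)+\Delta(a)b$), the Ore extension $R[x,\sigma,\Delta]$ is the ring generated by $R$ and an element $x$ such that $1,x,x^2,\dots$ is a basis of it as a left $R$-module and $xr=\sigma(r)x+\Delta(r)$ for all $r\in R$; $R[x,\sigma,0]$ is the case $\Delta=0$. The centralizer of a subset $T$ is the set of elements commuting with every element of $T$. For an integer $k$, $Sep^k(X)=\{p\in X: \sigma^k(p)\neq p\}$ (so $Sep^0(X)=\emptyset$). *)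

theory Defs
  imports Complex_Main
begin

text \<open>The algebra A of all real functions on a finite set X (modelled by a finite type 'n,
  so n = CARD('n) \<ge> 1 automatically), with pointwise operations.
  An element sum_{k} f_k x^k of the skew polynomial ring A[x, sig, 0] is represented by its
  coefficient sequence k \<mapsto> f_k, which must have finite support.\<close>

definition skew_polys :: "(nat \<Rightarrow> 'n \<Rightarrow> real) set" where
  "skew_polys = {p. finite {k. p k \<noteq> (\<lambda>_. 0)}}"

text \<open>Multiplication in the Ore extension R[x, sig, 0] with R = A: determined by
  (f x^k)(g x^l) = f sig^k(g) x^(k+l), i.e. x r = sig(r) x.\<close>
definition skew_mult ::
  "(('n \<Rightarrow> real) \<Rightarrow> ('n \<Rightarrow> real)) \<Rightarrow> (nat \<Rightarrow> 'n \<Rightarrow> real) \<Rightarrow> (nat \<Rightarrow> 'n \<Rightarrow> real) \<Rightarrow> (nat \<Rightarrow> 'n \<Rightarrow> real)" where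
  "skew_mult sig p q = (\<lambda>m t. \<Sum>k\<le>m. p k t * (sig ^^ k) (q (m - k)) t)"

definition skew_const :: "('n \<Rightarrow> real) \<Rightarrow> (nat \<Rightarrow> 'n \<Rightarrow> real)" where
  "skew_const a = (\<lambda>k. if k = 0 then a else (\<lambda>_. 0))"

definition centralizer_A :: "(('n \<Rightarrow> real) \<Rightarrow> ('n \<Rightarrow> real)) \<Rightarrow> (nat \<Rightarrow> 'n \<Rightarrow> real) set" where
  "centralizer_A sig = {p \<in> skew_polys. \<forall>a. skew_mult sig p (skew_const a) = skew_mult sig (skew_const a) p}"

definition Sep :: "('n \<Rightarrow> 'n) \<Rightarrow> nat \<Rightarrow> 'n set" where
  "Sep \<sigma> k = {t. (\<sigma> ^^ k) t \<noteq> t}"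

end

theory Submission
  imports Defs
begin

text \<open>Since \<open>\<tilde>\<sigma>\<^sup>k(a) = a \<circ> \<sigma>\<^sup>-\<^sup>k\<close>, the coefficient of \<open>x\<^sup>k\<close> in \<open>p a\<close>, for \<open>p = \<Sum> f\<^sub>k x\<^sup>k\<close>, is \<open>f\<^sub>k \<cdot> (a \<circ> \<sigma>\<^sup>-\<^sup>k)\<close>,
  while in \<open>a p\<close> it is \<open>a \<cdot> f\<^sub>k\<close>. These agree for every \<open>a\<close> exactly when \<open>f\<^sub>k\<close> vanishes at every
  point \<open>t\<close> not fixed by \<open>\<sigma>\<^sup>k\<close>: for necessity, take for \<open>a\<close> the indicator function of \<open>t\<close>.\<close>

lemma funpow_precompose:
  fixes f :: "'a \<Rightarrow> 'b" and g :: "'a \<Rightarrow> 'a"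
  shows "((\<lambda>f. f \<circ> g) ^^ k) f = f \<circ> (g ^^ k)"
  by (induction k) (simp_all add: funpow_swap1)

lemma funpow_inv_fixed_iff:
  assumes "bij \<sigma>"
  shows "(inv \<sigma> ^^ k) t = t \<longleftrightarrow> (\<sigma> ^^ k) t = t"
  using inv_fn_o_fn_is_id[OF assms, of k] fn_o_inv_fn_is_id[OF assms, of k]
  by (metis comp_apply)

lemma skew_mult_const_right:
  "skew_mult (\<lambda>f. f \<circ> g) p (skew_const a) m t = p m t * a ((g ^^ m) t)"
proof -
  have "skew_mult (\<lambda>f. f \<circ> g) p (skew_const a) m t
      = (\<Sum>k\<le>m. if k = m then p m t * a ((g ^^ m) t) else 0)"
    unfolding skew_mult_def skew_const_def funpow_precompose
    by (intro sum.cong) auto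
  then show ?thesis by simp
qed

lemma skew_mult_const_left:
  "skew_mult (\<lambda>f. f \<circ> g) (skew_const a) p m t = a t * p m t"
proof -
  have "skew_mult (\<lambda>f. f \<circ> g) (skew_const a) p m t
      = (\<Sum>k\<le>m. if k = 0 then a t * p m t else 0)"
    unfolding skew_mult_def skew_const_def funpow_precompose
    by (intro sum.cong) auto
  then show ?thesis by simp
qed

lemma skew_commutes_with_consts_iff:
  fixes g :: "'a \<Rightarrow> 'a"
  shows
  "(\<forall>a. skew_mult (\<lambda>f. f \<circ> g) p (skew_const a) = skew_mult (\<lambda>f. f \<circ> g) (skew_const a) p)
    \<longleftrightarrow> (\<forall>k t. (g ^^ k) t \<noteq> t \<longrightarrow> p k t = 0)"
proof
  assume comm: "\<forall>a. skew_mult (\<lambda>f. f \<circ> g) p (skew_const a) = skew_mult (\<lambda>f. f \<circ> g) (skew_const a) p"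
  show "\<forall>k t. (g ^^ k) t \<noteq> t \<longrightarrow> p k t = 0"
  proof (intro allI impI)
    fix k t
    assume moved: "(g ^^ k) t \<noteq> t"
    define a :: "'a \<Rightarrow> real" where "a s = (if s = t then 1 else 0)" for s
    have "skew_mult (\<lambda>f. f \<circ> g) p (skew_const a) k t = skew_mult (\<lambda>f. f \<circ> g) (skew_const a) p k t"
      using comm by simp
    then show "p k t = 0"
      using moved by (simp add: skew_mult_const_right skew_mult_const_left a_def)
  qed
next
  assume "\<forall>k t. (g ^^ k) t \<noteq> t \<longrightarrow> p k t = 0"
  then have "p k t * a ((g ^^ k) t) = a t * p k t" for a :: "'a \<Rightarrow> real" and k t
    by (cases "(g ^^ k) t = t") auto
  then show "\<forall>a. skew_mult (\<lambda>f. f \<circ> g) p (skew_const a) = skew_mult (\<lambda>f. f \<circ> g) (skew_const a) p"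
    by (simp add: fun_eq_iff skew_mult_const_right skew_mult_const_left)
qed

theorem theorem3:
  fixes \<sigma> :: "'n::finite \<Rightarrow> 'n"
  assumes "bij \<sigma>"
  shows "centralizer_A (\<lambda>f. f \<circ> inv \<sigma>) =
    {p \<in> skew_polys. \<forall>k. \<forall>t \<in> Sep \<sigma> k. p k t = 0}"
  unfolding centralizer_A_def Sep_def skew_commutes_with_consts_iff
  using funpow_inv_fixed_iff[OF assms] by auto

end
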